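(* Let $\mathcal P$ be a σ-convex, pre-Hahn-localizable family of probability measures on $(\Omega,\mathcal F)$, with localization $\mathcal Q$ and supports $\{S_Q\}_{Q\in\mathcal Q}$. The following are equivalent: (1) $\mathcal P$ is Hahn-localizable (with respect to $\mathcal Q$ and $\{S_Q\}$); (2) $\mathbb L^\infty(\mathcal P)$, ordered by $f\le g$ iff $f\le g$ $\mathcal P$-q.s., is Dedekind complete; (3) for every $\mathcal P$-q.s. uniformly bounded family $\{g_Q\}_{Q\in\mathcal Q}$ of non-negative $\mathcal F$-measurable functions with $g_Q=0$ $\mathcal P$-q.s. on $\Omega\setminus S_Q$, there is $g\in\mathcal L^\infty(\mathcal P)$ with $g\mathbf 1_{S_Q}=g_Q\mathbf 1_{S_Q}$ $\mathcal P$-q.s. for every $Q\in\mathcal Q$.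
   Context: $\mathcal P$ is σ-convex if it is closed under countable convex combinations. A set is $\mathcal P$-polar if contained in some $N\in\mathcal F$ with $P(N)=0$ for all $P\in\mathcal P$; $\mathcal P$-q.s. means outside a polar set. $\mathcal L^\infty(\mathcal P)$ is the set of $\mathcal F$-measurable real functions bounded $\mathcal P$-q.s.; $\mathbb L^\infty(\mathcal P)$ is its quotient by $\mathcal P$-q.s. equality. Dedekind complete: every nonempty subset bounded above has a least upper bound. $\mathcal P\lll\mathcal Q$ means each $P\in\mathcal P$ is absolutely continuous w.r.t. some $Q\in\mathcal Q$; $\mathrm{sconv}(\mathcal Q)$ denotes countable convex combinations. $\mathcal P$ is pre-Hahn-localizable with localization $\mathcal Q$ (probability measures on $\mathcal F$) and supports $S_Q\in\mathcal F$ if $Q(S_R)=\delta_{QR}$ for $Q,R\in\mathcal Q$ and $\mathcal Q\lll\mathcal P\lll\mathrm{sconv}(\mathcal Q)$. It is Hahn-localizable (w.r.t. $\mathcal Q$, $\{S_Q\}$) if for every family $E_Q\in\mathcal F$, $E_Q\subseteq S_Q$, there is $S\in\mathcal F$ with $Q(E_Q\setminus S)=0$ for all $Q\in\mathcal Q$, and such that any $F\in\mathcal F$ with $Q(E_Q\setminus F)=0$ for all $Q$ satisfies $Q(S\setminus F)=0$ for all $Q$. *)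

theory Defs
  imports "HOL-Probability.Probability"
begin

text \<open>The measurable space (\<Omega>, F) is represented by a measure M; only space M and sets M matter.\<close>

definition prob_on :: "'a measure \<Rightarrow> 'a measure \<Rightarrow> bool" where
  "prob_on M P \<longleftrightarrow> prob_space P \<and> sets P = sets M"

definition sconv_comb :: "'a measure \<Rightarrow> (nat \<Rightarrow> real) \<Rightarrow> (nat \<Rightarrow> 'a measure) \<Rightarrow> 'a measure" where
  "sconv_comb M \<alpha> Ps =
     measure_of (space M) (sets M) (\<lambda>A. \<Sum>n. ennreal (\<alpha> n) * emeasure (Ps n) A)"

definition cc_weights :: "(nat \<Rightarrow> real) \<Rightarrow> bool" where
  "cc_weights \<alpha> \<longleftrightarrow> (\<forall>n. 0 \<le> \<alpha> n) \<and> \<alpha> sums 1"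

definition sigma_convex :: "'a measure \<Rightarrow> 'a measure set \<Rightarrow> bool" where
  "sigma_convex M \<P> \<longleftrightarrow>
     (\<forall>\<alpha> Ps. cc_weights \<alpha> \<and> range Ps \<subseteq> \<P> \<longrightarrow> sconv_comb M \<alpha> Ps \<in> \<P>)"

definition sconv :: "'a measure \<Rightarrow> 'a measure set \<Rightarrow> 'a measure set" where
  "sconv M \<Q> = {sconv_comb M \<alpha> Qs | \<alpha> Qs. cc_weights \<alpha> \<and> range Qs \<subseteq> \<Q>}"

definition polar :: "'a measure \<Rightarrow> 'a measure set \<Rightarrow> 'a set \<Rightarrow> bool" where
  "polar M \<P> A \<longleftrightarrow> (\<exists>N\<in>sets M. A \<subseteq> N \<and> (\<forall>P\<in>\<P>. emeasure P N = 0))"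

definition qs :: "'a measure \<Rightarrow> 'a measure set \<Rightarrow> ('a \<Rightarrow> bool) \<Rightarrow> bool" where
  "qs M \<P> \<phi> \<longleftrightarrow> polar M \<P> {\<omega>\<in>space M. \<not> \<phi> \<omega>}"

definition dominated_by :: "'a measure set \<Rightarrow> 'a measure set \<Rightarrow> bool" where
  "dominated_by \<P> \<Q> \<longleftrightarrow> (\<forall>P\<in>\<P>. \<exists>Q\<in>\<Q>. absolutely_continuous Q P)"

definition pre_hahn_localizable ::
  "'a measure \<Rightarrow> 'a measure set \<Rightarrow> 'a measure set \<Rightarrow> ('a measure \<Rightarrow> 'a set) \<Rightarrow> bool" where
  "pre_hahn_localizable M \<P> \<Q> S \<longleftrightarrow>
     (\<forall>Q\<in>\<Q>. prob_on M Q \<and> S Q \<in> sets M) \<and>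
     (\<forall>Q\<in>\<Q>. \<forall>R\<in>\<Q>. emeasure Q (S R) = (if Q = R then 1 else 0)) \<and>
     dominated_by \<Q> \<P> \<and> dominated_by \<P> (sconv M \<Q>)"

definition hahn_localizable ::
  "'a measure \<Rightarrow> 'a measure set \<Rightarrow> 'a measure set \<Rightarrow> ('a measure \<Rightarrow> 'a set) \<Rightarrow> bool" where
  "hahn_localizable M \<P> \<Q> S \<longleftrightarrow>
     pre_hahn_localizable M \<P> \<Q> S \<and>
     (\<forall>E. (\<forall>Q\<in>\<Q>. E Q \<in> sets M \<and> E Q \<subseteq> S Q) \<longrightarrow>
        (\<exists>T\<in>sets M. (\<forall>Q\<in>\<Q>. emeasure Q (E Q - T) = 0) \<and>
           (\<forall>F\<in>sets M. (\<forall>Q\<in>\<Q>. emeasure Q (E Q - F) = 0) \<longrightarrow>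
              (\<forall>Q\<in>\<Q>. emeasure Q (T - F) = 0))))"

definition Linf :: "'a measure \<Rightarrow> 'a measure set \<Rightarrow> ('a \<Rightarrow> real) set" where
  "Linf M \<P> = {f. f \<in> borel_measurable M \<and> (\<exists>c. qs M \<P> (\<lambda>\<omega>. \<bar>f \<omega>\<bar> \<le> c))}"

text \<open>Order on \<L>^\<infinity>: f \<le> g \<P>-q.s. (the order of the quotient \<bar>L^\<infinity>, lifted to representatives).\<close>
definition qs_le :: "'a measure \<Rightarrow> 'a measure set \<Rightarrow> ('a \<Rightarrow> real) \<Rightarrow> ('a \<Rightarrow> real) \<Rightarrow> bool" where
  "qs_le M \<P> f g \<longleftrightarrow> qs M \<P> (\<lambda>\<omega>. f \<omega> \<le> g \<omega>)"

text \<open>Dedekind completeness of \<bar>L^\<infinity>(\<P>), stated on representatives: every nonempty subset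
  bounded above in \<L>^\<infinity> has a least upper bound in \<L>^\<infinity> (unique up to q.s. equality).\<close>
definition Linf_dedekind_complete :: "'a measure \<Rightarrow> 'a measure set \<Rightarrow> bool" where
  "Linf_dedekind_complete M \<P> \<longleftrightarrow>
     (\<forall>A. A \<subseteq> Linf M \<P> \<and> A \<noteq> {} \<and> (\<exists>u\<in>Linf M \<P>. \<forall>f\<in>A. qs_le M \<P> f u) \<longrightarrow>
        (\<exists>s\<in>Linf M \<P>. (\<forall>f\<in>A. qs_le M \<P> f s) \<and>
           (\<forall>u\<in>Linf M \<P>. (\<forall>f\<in>A. qs_le M \<P> f u) \<longrightarrow> qs_le M \<P> s u)))"

end

theory Submission
  imports Defs
begin

text \<open>
  Because \<open>\<Q> \<lll> \<P> \<lll> sconv \<Q>\<close>, the families \<open>\<P>\<close> and \<open>\<Q>\<close> have the same polar sets, so every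
  quasi-sure notion may be taken with respect to \<open>\<Q>\<close>.
  Since \<open>Q (S R) = \<delta>\<^sub>Q\<^sub>R\<close>, Hahn localizability says that any local sets \<open>E Q \<subseteq> S Q\<close> glue to a
  single set \<open>T\<close> with \<open>Q (T \<triangle> E Q) = 0\<close> for all \<open>Q\<close>.

  (1)\<Rightarrow>(2): under one \<open>Q\<close> any family of sets has a countable essential union (maximise the
  measure of countable unions); gluing these over \<open>Q\<close> yields, for each rational \<open>r\<close>, an
  essential union \<open>T r\<close> of the level sets \<open>{f > r}\<close>, \<open>f \<in> A\<close>, modulo polar sets, and the
  supremum of the levels \<open>r\<close> with \<open>\<omega> \<in> T r\<close> is the least upper bound of \<open>A\<close>.
  (2)\<Rightarrow>(3): the supremum \<open>s\<close> of \<open>0\<close> and all \<open>g Q \<cdot> 1\<^bsub>S Q\<^esub>\<close> equals \<open>g Q\<close> on \<open>S Q\<close>, since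
  replacing \<open>s\<close> by \<open>g Q\<close> on \<open>S Q\<close> still gives an upper bound (distinct supports meet in polar
  sets). (3)\<Rightarrow>(1): apply (3) to the indicators of the \<open>E Q\<close> and take \<open>T = {h \<ge> 1/2}\<close>.
\<close>

lemma sets_sconv_comb: "sets (sconv_comb M \<alpha> Ps) = sets M"
  by (simp add: sconv_comb_def sets_measure_of_conv sets.space_closed sets.sigma_sets_eq)

lemma polar_subset: "polar M \<P> A \<Longrightarrow> B \<subseteq> A \<Longrightarrow> polar M \<P> B"
  unfolding polar_def by blast

lemma polar_sconv:
  assumes "polar M \<Q> A"
  shows "polar M (sconv M \<Q>) A"
proof -
  obtain N where N: "N \<in> sets M" "A \<subseteq> N" "\<forall>Q\<in>\<Q>. emeasure Q N = 0"
    using assms unfolding polar_def by blast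
  have "emeasure (sconv_comb M \<alpha> Qs) N = 0" if "range Qs \<subseteq> \<Q>" for \<alpha> Qs
  proof -
    have "\<forall>n. emeasure (Qs n) N = 0"
      using N that by (auto simp: image_subset_iff)
    then show ?thesis
      by (simp add: sconv_comb_def emeasure_measure_of_conv)
  qed
  then show ?thesis
    using N unfolding polar_def sconv_def by blast
qed

lemma polar_dominated:
  assumes "dominated_by \<P> \<Q>" and "\<forall>Q\<in>\<Q>. sets Q = sets M" and "polar M \<Q> A"
  shows "polar M \<P> A"
proof -
  obtain N where N: "N \<in> sets M" "A \<subseteq> N" "\<forall>Q\<in>\<Q>. emeasure Q N = 0"
    using assms(3) unfolding polar_def by blast
  have "emeasure P N = 0" if P: "P \<in> \<P>" for P
  proof -
    obtain Q where Q: "Q \<in> \<Q>" and ac: "absolutely_continuous Q P"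
      using assms(1) P unfolding dominated_by_def by blast
    have "N \<in> null_sets Q"
      using N Q assms(2) by (simp add: null_sets_def)
    with ac have "N \<in> null_sets P"
      unfolding absolutely_continuous_def by (rule subsetD)
    then show ?thesis
      by (rule null_setsD1)
  qed
  with N show ?thesis
    unfolding polar_def by blast
qed

lemma polar_eq_if_pre_hahn_localizable:
  assumes "\<forall>P\<in>\<P>. prob_on M P" and "pre_hahn_localizable M \<P> \<Q> S"
  shows "polar M \<P> = polar M \<Q>"
proof -
  have "dominated_by \<Q> \<P>" and "dominated_by \<P> (sconv M \<Q>)"
    using assms(2) unfolding pre_hahn_localizable_def by simp_all
  moreover have "\<forall>P\<in>\<P>. sets P = sets M"
    using assms(1) by (simp add: prob_on_def)
  moreover have "\<forall>Q\<in>sconv M \<Q>. sets Q = sets M"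
    by (auto simp: sconv_def sets_sconv_comb)
  ultimately show ?thesis
    by (intro ext iffI) (auto intro: polar_dominated polar_sconv)
qed

lemma qs_Linf_eq_if_polar_eq:
  assumes "polar M \<P> = polar M \<Q>"
  shows "qs M \<P> = qs M \<Q>" and "Linf M \<P> = Linf M \<Q>"
    and "Linf_dedekind_complete M \<P> \<longleftrightarrow> Linf_dedekind_complete M \<Q>"
proof -
  show qs_eq: "qs M \<P> = qs M \<Q>"
    using assms by (simp add: qs_def [abs_def])
  then show Linf_eq: "Linf M \<P> = Linf M \<Q>"
    by (simp add: Linf_def)
  show "Linf_dedekind_complete M \<P> \<longleftrightarrow> Linf_dedekind_complete M \<Q>"
    using qs_eq Linf_eq by (simp add: Linf_dedekind_complete_def qs_le_def [abs_def])
qed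

lemma qs_mono: "qs M \<P> \<phi> \<Longrightarrow> (\<And>\<omega>. \<omega> \<in> space M \<Longrightarrow> \<phi> \<omega> \<Longrightarrow> \<psi> \<omega>) \<Longrightarrow> qs M \<P> \<psi>"
  unfolding qs_def by (erule polar_subset) blast

lemma qs_everywhere: "(\<And>\<omega>. \<omega> \<in> space M \<Longrightarrow> \<phi> \<omega>) \<Longrightarrow> qs M \<P> \<phi>"
  unfolding qs_def polar_def by auto

lemma qs_notin_iff: "A \<subseteq> space M \<Longrightarrow> qs M \<P> (\<lambda>\<omega>. \<omega> \<notin> A) \<longleftrightarrow> polar M \<P> A"
  unfolding qs_def by (rule arg_cong[where f = "polar M \<P>"]) blast

lemma Linf_const: "(\<lambda>_. c) \<in> Linf M \<P>"
  unfolding Linf_def by (auto intro: qs_everywhere)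

lemma countable_Union_max_emeasure:
  assumes "\<E> \<subseteq> sets M"
  shows "\<exists>\<C>. countable \<C> \<and> \<C> \<subseteq> \<E> \<and>
           (\<forall>\<C>'. countable \<C>' \<and> \<C>' \<subseteq> \<E> \<longrightarrow> emeasure M (\<Union>\<C>') \<le> emeasure M (\<Union>\<C>))"
proof -
  let ?U = "{\<C>. countable \<C> \<and> \<C> \<subseteq> \<E>}"
  have "{} \<in> ?U"
    by simp
  then have "?U \<noteq> {}"
    by auto
  from ennreal_SUP_countable_SUP[OF this, of "\<lambda>\<C>. emeasure M (\<Union>\<C>)"]
  obtain f :: "nat \<Rightarrow> ennreal" where f: "range f \<subseteq> (\<lambda>\<C>. emeasure M (\<Union>\<C>)) ` ?U"
    and SUP_eq: "(SUP \<C>\<in>?U. emeasure M (\<Union>\<C>)) = (SUP i. f i)"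
    by blast
  have "\<forall>i. \<exists>\<C>. \<C> \<in> ?U \<and> f i = emeasure M (\<Union>\<C>)"
    using f by (auto simp: image_subset_iff)
  from choice[OF this] obtain \<C>s :: "nat \<Rightarrow> 'a set set"
    where \<C>s: "\<forall>i. \<C>s i \<in> ?U \<and> f i = emeasure M (\<Union>(\<C>s i))" ..
  define \<C> where "\<C> = (\<Union>i. \<C>s i)"
  have \<C>: "\<C> \<in> ?U"
    using \<C>s unfolding \<C>_def by (auto intro!: countable_UN)
  then have Union_sets: "\<Union>\<C> \<in> sets M"
    using assms by (intro sets.countable_Union) auto
  have "emeasure M (\<Union>\<C>') \<le> emeasure M (\<Union>\<C>)" if "\<C>' \<in> ?U" for \<C>'
  proof -
    have "emeasure M (\<Union>\<C>') \<le> (SUP i. f i)"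
      unfolding SUP_eq[symmetric] using that by (rule SUP_upper)
    also have "\<dots> \<le> emeasure M (\<Union>\<C>)"
    proof (rule SUP_least)
      fix i
      have "\<Union>(\<C>s i) \<subseteq> \<Union>\<C>"
        unfolding \<C>_def by blast
      then show "f i \<le> emeasure M (\<Union>\<C>)"
        using \<C>s Union_sets by (simp add: emeasure_mono)
    qed
    finally show ?thesis .
  qed
  with \<C> show ?thesis
    by blast
qed

lemma (in finite_measure) countable_ess_union:
  assumes "\<E> \<subseteq> sets M"
  obtains \<C> where "countable \<C>" and "\<C> \<subseteq> \<E>" and "\<And>E. E \<in> \<E> \<Longrightarrow> E - \<Union>\<C> \<in> null_sets M"
proof -
  from countable_Union_max_emeasure[OF assms] obtain \<C> where \<C>: "countable \<C>" "\<C> \<subseteq> \<E>"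
    and maximal: "\<forall>\<C>'. countable \<C>' \<and> \<C>' \<subseteq> \<E> \<longrightarrow> emeasure M (\<Union>\<C>') \<le> emeasure M (\<Union>\<C>)"
    by blast
  have Union_sets: "\<Union>\<C> \<in> sets M"
    using \<C> assms by (intro sets.countable_Union) auto
  show thesis
  proof (rule that[OF \<C>])
    fix E
    assume E: "E \<in> \<E>"
    with \<C> have "emeasure M (E \<union> \<Union>\<C>) \<le> emeasure M (\<Union>\<C>)"
      using maximal[rule_format, of "insert E \<C>"] by simp
    moreover have "emeasure M (E \<union> \<Union>\<C>) = emeasure M (\<Union>\<C>) + emeasure M (E - \<Union>\<C>)"
      using emeasure_Un[OF Union_sets, of E] E assms by (auto simp: Un_commute)
    ultimately have "emeasure M (E - \<Union>\<C>) = 0"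
      using ennreal_add_left_cancel_le[of "emeasure M (\<Union>\<C>)" _ 0] by simp
    then show "E - \<Union>\<C> \<in> null_sets M"
      using E assms Union_sets by (auto intro: null_setsI)
  qed
qed

definition level_sup :: "real \<Rightarrow> real \<Rightarrow> (real \<Rightarrow> 'a set) \<Rightarrow> 'a \<Rightarrow> real" where
  "level_sup L K T \<omega> = (SUP r\<in>\<rat>. if \<omega> \<in> T r then max L (min r K) else L)"

lemma bdd_above_level_sup:
  fixes L K :: real
  shows "bdd_above ((\<lambda>r. if \<omega> \<in> T r then max L (min r K) else L) ` \<rat>)"
  by (rule bdd_aboveI[of _ "max L K"]) (auto simp: min_le_iff_disj)

lemma level_sup_lower: "L \<le> level_sup L K T \<omega>"
  unfolding level_sup_def
  by (rule order_trans[OF _ cSUP_upper[OF Rats_0 bdd_above_level_sup]]) auto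

lemma level_sup_upper: "level_sup L K T \<omega> \<le> max L K"
  unfolding level_sup_def using Rats_0 by (intro cSUP_least) (auto simp: min_le_iff_disj)

lemma borel_measurable_level_sup:
  assumes "\<And>r. T r \<in> sets M"
  shows "level_sup L K T \<in> borel_measurable M"
proof -
  have "(\<lambda>\<omega>. if \<omega> \<in> T r then max L (min r K) else L) \<in> borel_measurable M" for r
    using assms[of r] by measurable
  then show ?thesis
    unfolding level_sup_def[abs_def]
    by (rule borel_measurable_cSUP[OF countable_rat _ bdd_above_level_sup])
qed

lemma level_sup_ge:
  assumes "x \<le> K" and "\<And>r. r \<in> \<rat> \<Longrightarrow> r < x \<Longrightarrow> \<omega> \<in> T r"
  shows "x \<le> level_sup L K T \<omega>"
proof (rule ccontr)
  assume "\<not> x \<le> level_sup L K T \<omega>"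
  then obtain r where r: "r \<in> \<rat>" "level_sup L K T \<omega> < r" "r < x"
    using Rats_dense_in_real by (metis not_le)
  then have "r \<le> (if \<omega> \<in> T r then max L (min r K) else L)"
    using assms by auto
  also have "\<dots> \<le> level_sup L K T \<omega>"
    unfolding level_sup_def using r(1) bdd_above_level_sup by (rule cSUP_upper)
  finally show False
    using r(2) by simp
qed

lemma level_sup_le:
  assumes "L \<le> y" and "\<And>r. r \<in> \<rat> \<Longrightarrow> \<omega> \<in> T r \<Longrightarrow> r \<le> y"
  shows "level_sup L K T \<omega> \<le> y"
  unfolding level_sup_def using Rats_0 assms by (intro cSUP_least) (auto simp: min_le_iff_disj)

locale measure_family =
  fixes M :: "'a measure" and \<Q> :: "'a measure set"
  assumes sets_family: "Q \<in> \<Q> \<Longrightarrow> sets Q = sets M"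
begin

lemma null_sets_family_iff: "Q \<in> \<Q> \<Longrightarrow> A \<in> null_sets Q \<longleftrightarrow> A \<in> sets M \<and> emeasure Q A = 0"
  using sets_family by (auto simp: null_sets_def)

lemma null_sets_family_subset:
  "Q \<in> \<Q> \<Longrightarrow> B \<in> null_sets Q \<Longrightarrow> A \<subseteq> B \<Longrightarrow> A \<in> sets M \<Longrightarrow> A \<in> null_sets Q"
  using sets_family null_sets_subset by metis

lemma polar_measurable_iff:
  assumes "A \<in> sets M"
  shows "polar M \<Q> A \<longleftrightarrow> (\<forall>Q\<in>\<Q>. A \<in> null_sets Q)"
proof
  assume "polar M \<Q> A"
  then obtain N where N: "N \<in> sets M" "A \<subseteq> N" "\<forall>Q\<in>\<Q>. emeasure Q N = 0"
    unfolding polar_def by blast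
  show "\<forall>Q\<in>\<Q>. A \<in> null_sets Q"
  proof
    fix Q
    assume Q: "Q \<in> \<Q>"
    with N have "N \<in> null_sets Q"
      by (simp add: null_sets_family_iff)
    with N(2) assms Q show "A \<in> null_sets Q"
      using sets_family null_sets_subset by blast
  qed
next
  assume "\<forall>Q\<in>\<Q>. A \<in> null_sets Q"
  with assms show "polar M \<Q> A"
    unfolding polar_def by auto
qed

lemma polar_UN:
  assumes "countable I" and "\<And>i. i \<in> I \<Longrightarrow> polar M \<Q> (A i)"
  shows "polar M \<Q> (\<Union>i\<in>I. A i)"
proof -
  have "\<forall>i\<in>I. \<exists>N. N \<in> sets M \<and> A i \<subseteq> N \<and> (\<forall>Q\<in>\<Q>. N \<in> null_sets Q)"
    using assms(2) unfolding polar_def by (fastforce simp: null_sets_family_iff)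
  from bchoice[OF this] obtain N
    where N: "\<forall>i\<in>I. N i \<in> sets M \<and> A i \<subseteq> N i \<and> (\<forall>Q\<in>\<Q>. N i \<in> null_sets Q)"
    by blast
  have "polar M \<Q> (\<Union>i\<in>I. N i)"
    using assms(1) N by (subst polar_measurable_iff) (auto intro: null_sets_UN')
  then show ?thesis
    by (rule polar_subset) (use N in blast)
qed

lemma polar_Un:
  assumes "polar M \<Q> A" and "polar M \<Q> B"
  shows "polar M \<Q> (A \<union> B)"
proof -
  have "polar M \<Q> (\<Union>X\<in>{A, B}. X)"
    by (rule polar_UN) (use assms in auto)
  then show ?thesis
    by simp
qed

lemma qs_conj: "qs M \<Q> \<phi> \<Longrightarrow> qs M \<Q> \<psi> \<Longrightarrow> qs M \<Q> (\<lambda>\<omega>. \<phi> \<omega> \<and> \<psi> \<omega>)"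
  unfolding qs_def by (drule (1) polar_Un) (erule polar_subset, blast)

lemma qs_ball:
  assumes "countable I" and "\<And>i. i \<in> I \<Longrightarrow> qs M \<Q> (\<phi> i)"
  shows "qs M \<Q> (\<lambda>\<omega>. \<forall>i\<in>I. \<phi> i \<omega>)"
proof -
  have "polar M \<Q> (\<Union>i\<in>I. {\<omega>\<in>space M. \<not> \<phi> i \<omega>})"
    using assms unfolding qs_def by (rule polar_UN)
  then show ?thesis
    unfolding qs_def by (rule polar_subset) blast
qed

lemma qs_le_level_sup:
  assumes levels: "\<And>r. r \<in> \<rat> \<Longrightarrow> polar M \<Q> ({\<omega>\<in>space M. r < f \<omega>} - T r)"
    and bound: "qs M \<Q> (\<lambda>\<omega>. f \<omega> \<le> K)"
  shows "qs M \<Q> (\<lambda>\<omega>. f \<omega> \<le> level_sup L K T \<omega>)"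
proof -
  have "qs M \<Q> (\<lambda>\<omega>. \<omega> \<notin> {\<omega>\<in>space M. r < f \<omega>} - T r)" if "r \<in> \<rat>" for r
    using levels[OF that] by (subst qs_notin_iff) auto
  then have "qs M \<Q> (\<lambda>\<omega>. \<forall>r\<in>\<rat>. \<omega> \<notin> {\<omega>\<in>space M. r < f \<omega>} - T r)"
    by (rule qs_ball[OF countable_rat])
  then have "qs M \<Q> (\<lambda>\<omega>. (\<forall>r\<in>\<rat>. \<omega> \<notin> {\<omega>\<in>space M. r < f \<omega>} - T r) \<and> f \<omega> \<le> K)"
    using bound by (rule qs_conj)
  then show ?thesis
    by (rule qs_mono) (auto intro!: level_sup_ge)
qed

lemma qs_level_sup_le:
  assumes levels: "\<And>r. r \<in> \<rat> \<Longrightarrow> polar M \<Q> (T r - {\<omega>\<in>space M. r < v \<omega>})"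
    and T: "\<And>r. T r \<subseteq> space M" and bound: "qs M \<Q> (\<lambda>\<omega>. L \<le> v \<omega>)"
  shows "qs M \<Q> (\<lambda>\<omega>. level_sup L K T \<omega> \<le> v \<omega>)"
proof -
  have "qs M \<Q> (\<lambda>\<omega>. \<omega> \<notin> T r - {\<omega>\<in>space M. r < v \<omega>})" if "r \<in> \<rat>" for r
    using levels[OF that] T by (subst qs_notin_iff) auto
  then have "qs M \<Q> (\<lambda>\<omega>. \<forall>r\<in>\<rat>. \<omega> \<notin> T r - {\<omega>\<in>space M. r < v \<omega>})"
    by (rule qs_ball[OF countable_rat])
  then have "qs M \<Q> (\<lambda>\<omega>. (\<forall>r\<in>\<rat>. \<omega> \<notin> T r - {\<omega>\<in>space M. r < v \<omega>}) \<and> L \<le> v \<omega>)"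
    using bound by (rule qs_conj)
  then show ?thesis
  proof (rule qs_mono)
    fix \<omega>
    assume "\<omega> \<in> space M" and
      \<omega>: "(\<forall>r\<in>\<rat>. \<omega> \<notin> T r - {\<omega>\<in>space M. r < v \<omega>}) \<and> L \<le> v \<omega>"
    then have "r \<le> v \<omega>" if "r \<in> \<rat>" and "\<omega> \<in> T r" for r
      using that by (auto intro: less_imp_le)
    with \<omega> show "level_sup L K T \<omega> \<le> v \<omega>"
      by (intro level_sup_le) auto
  qed
qed

end

definition sets_glue :: "'a measure \<Rightarrow> 'a measure set \<Rightarrow> ('a measure \<Rightarrow> 'a set) \<Rightarrow> bool" where
  "sets_glue M \<Q> S \<longleftrightarrow>
     (\<forall>E. (\<forall>Q\<in>\<Q>. E Q \<in> sets M \<and> E Q \<subseteq> S Q) \<longrightarrow>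
        (\<exists>T\<in>sets M. \<forall>Q\<in>\<Q>. emeasure Q (sym_diff T (E Q)) = 0))"

locale localization = measure_family M \<Q> for M :: "'a measure" and \<Q> +
  fixes S :: "'a measure \<Rightarrow> 'a set"
  assumes prob_space_family: "Q \<in> \<Q> \<Longrightarrow> prob_space Q"
    and sets_support: "Q \<in> \<Q> \<Longrightarrow> S Q \<in> sets M"
    and emeasure_support: "Q \<in> \<Q> \<Longrightarrow> R \<in> \<Q> \<Longrightarrow> emeasure Q (S R) = (if Q = R then 1 else 0)"

lemma localization_if_pre_hahn_localizable:
  assumes "pre_hahn_localizable M \<P> \<Q> S"
  shows "localization M \<Q> S"
proof -
  have "\<forall>Q\<in>\<Q>. prob_on M Q \<and> S Q \<in> sets M"
    and "\<forall>Q\<in>\<Q>. \<forall>R\<in>\<Q>. emeasure Q (S R) = (if Q = R then 1 else 0)"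
    using assms unfolding pre_hahn_localizable_def by blast+
  then show ?thesis
    by (intro localization.intro measure_family.intro localization_axioms.intro)
      (simp_all add: prob_on_def)
qed

definition glue_functions ::
  "'a measure \<Rightarrow> 'a measure set \<Rightarrow> 'a measure set \<Rightarrow> ('a measure \<Rightarrow> 'a set) \<Rightarrow> bool" where
  "glue_functions M \<P> \<Q> S \<longleftrightarrow>
     (\<forall>g :: 'a measure \<Rightarrow> 'a \<Rightarrow> real.
        (\<forall>Q\<in>\<Q>. g Q \<in> borel_measurable M \<and> (\<forall>\<omega>\<in>space M. 0 \<le> g Q \<omega>) \<and>
            qs M \<P> (\<lambda>\<omega>. \<omega> \<notin> S Q \<longrightarrow> g Q \<omega> = 0)) \<and>
        (\<exists>c. \<forall>Q\<in>\<Q>. qs M \<P> (\<lambda>\<omega>. g Q \<omega> \<le> c)) \<longrightarrow>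
        (\<exists>h\<in>Linf M \<P>. \<forall>Q\<in>\<Q>.
            qs M \<P> (\<lambda>\<omega>. h \<omega> * indicator (S Q) \<omega> = g Q \<omega> * indicator (S Q) \<omega>)))"

context localization
begin

lemma support_null: "Q \<in> \<Q> \<Longrightarrow> R \<in> \<Q> \<Longrightarrow> Q \<noteq> R \<Longrightarrow> S R \<in> null_sets Q"
  using emeasure_support sets_support by (simp add: null_sets_family_iff)

lemma compl_support_null:
  assumes Q: "Q \<in> \<Q>"
  shows "space M - S Q \<in> null_sets Q"
proof -
  interpret prob_space Q
    by (rule prob_space_family[OF Q])
  have space_eq: "space Q = space M"
    using sets_family[OF Q] by (rule sets_eq_imp_space_eq)
  have "emeasure Q (space Q - S Q) = emeasure Q (space Q) - emeasure Q (S Q)"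
    using Q sets_support sets_family by (intro emeasure_compl) auto
  also have "\<dots> = 0"
    using emeasure_support[OF Q Q] by (simp add: emeasure_space_1)
  finally show ?thesis
    using Q sets_support space_eq by (simp add: null_sets_family_iff)
qed

lemma polar_support_Int:
  assumes Q: "Q \<in> \<Q>" and R: "R \<in> \<Q>" and "Q \<noteq> R"
  shows "polar M \<Q> (S Q \<inter> S R)"
proof -
  have S_Int: "S Q \<inter> S R \<in> sets M"
    using sets_support Q R by blast
  have "S Q \<inter> S R \<in> null_sets Q'" if Q': "Q' \<in> \<Q>" for Q'
  proof (cases "Q' = R")
    case True
    with Q R \<open>Q \<noteq> R\<close> have "S Q \<in> null_sets Q'"
      by (simp add: support_null)
    from null_sets_family_subset[OF Q' this _ S_Int] show ?thesis
      by blast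
  next
    case False
    with Q' R have "S R \<in> null_sets Q'"
      by (simp add: support_null)
    from null_sets_family_subset[OF Q' this _ S_Int] show ?thesis
      by blast
  qed
  with S_Int show ?thesis
    by (simp add: polar_measurable_iff)
qed

lemma glue_if_ess_union:
  assumes E: "\<forall>Q\<in>\<Q>. E Q \<in> sets M \<and> E Q \<subseteq> S Q" and T: "T \<in> sets M"
    and below: "\<forall>Q\<in>\<Q>. emeasure Q (E Q - T) = 0"
    and least: "\<forall>F\<in>sets M. (\<forall>Q\<in>\<Q>. emeasure Q (E Q - F) = 0) \<longrightarrow> (\<forall>Q\<in>\<Q>. emeasure Q (T - F) = 0)"
  shows "\<forall>Q\<in>\<Q>. emeasure Q (sym_diff T (E Q)) = 0"
proof
  fix Q
  assume Q: "Q \<in> \<Q>"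
  define F where "F = E Q \<union> (space M - S Q)"
  have F: "F \<in> sets M"
    using E Q sets_support unfolding F_def by auto
  have "emeasure R (E R - F) = 0" if R: "R \<in> \<Q>" for R
  proof (cases "R = Q")
    case True
    then have "E R - F = {}"
      unfolding F_def by blast
    then show ?thesis
      by (simp only: emeasure_empty)
  next
    case False
    have "E R - F \<subseteq> S Q"
      using E R sets.sets_into_space unfolding F_def by blast
    from null_sets_family_subset[OF R support_null[OF R Q False] this] have "E R - F \<in> null_sets R"
      using E R F by blast
    then show ?thesis
      by (rule null_setsD1)
  qed
  then have "T - F \<in> null_sets Q"
    using least F T Q by (simp add: null_sets_family_iff)
  then have "(T - F) \<union> (space M - S Q) \<in> null_sets Q"
    using compl_support_null[OF Q] by (rule null_sets.Un)
  moreover have "T - E Q \<subseteq> (T - F) \<union> (space M - S Q)"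
    using T sets.sets_into_space unfolding F_def by blast
  ultimately have "T - E Q \<in> null_sets Q"
    by (rule null_sets_family_subset[OF Q]) (use E T Q in auto)
  moreover have "E Q - T \<in> null_sets Q"
    using below E T Q by (auto simp: null_sets_family_iff)
  ultimately have "sym_diff T (E Q) \<in> null_sets Q"
    by (rule null_sets.Un)
  then show "emeasure Q (sym_diff T (E Q)) = 0"
    by (rule null_setsD1)
qed

lemma ess_union_if_glue:
  assumes E: "\<forall>Q\<in>\<Q>. E Q \<in> sets M" and T: "T \<in> sets M"
    and glue: "\<forall>Q\<in>\<Q>. emeasure Q (sym_diff T (E Q)) = 0"
  shows "\<forall>Q\<in>\<Q>. emeasure Q (E Q - T) = 0"
    and "\<forall>F\<in>sets M. (\<forall>Q\<in>\<Q>. emeasure Q (E Q - F) = 0) \<longrightarrow> (\<forall>Q\<in>\<Q>. emeasure Q (T - F) = 0)"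
proof -
  have sym_diff_null: "sym_diff T (E Q) \<in> null_sets Q" if "Q \<in> \<Q>" for Q
    using glue E T that by (simp add: null_sets_family_iff)
  show "\<forall>Q\<in>\<Q>. emeasure Q (E Q - T) = 0"
  proof
    fix Q
    assume Q: "Q \<in> \<Q>"
    from null_sets_family_subset[OF Q sym_diff_null[OF Q]] have "E Q - T \<in> null_sets Q"
      using E T Q by blast
    then show "emeasure Q (E Q - T) = 0"
      by (rule null_setsD1)
  qed
  show "\<forall>F\<in>sets M. (\<forall>Q\<in>\<Q>. emeasure Q (E Q - F) = 0) \<longrightarrow> (\<forall>Q\<in>\<Q>. emeasure Q (T - F) = 0)"
  proof (intro ballI impI)
    fix F Q
    assume F: "F \<in> sets M" and "\<forall>Q\<in>\<Q>. emeasure Q (E Q - F) = 0" and Q: "Q \<in> \<Q>"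
    then have "E Q - F \<in> null_sets Q"
      using E by (simp add: null_sets_family_iff)
    with sym_diff_null[OF Q] have null: "sym_diff T (E Q) \<union> (E Q - F) \<in> null_sets Q"
      by (rule null_sets.Un)
    have "T - F \<in> null_sets Q"
      by (rule null_sets_family_subset[OF Q null]) (use F T in auto)
    then show "emeasure Q (T - F) = 0"
      by (rule null_setsD1)
  qed
qed

lemma hahn_localizable_iff_sets_glue:
  "hahn_localizable M \<P> \<Q> S \<longleftrightarrow> pre_hahn_localizable M \<P> \<Q> S \<and> sets_glue M \<Q> S"
proof -
  have "(\<exists>T\<in>sets M. (\<forall>Q\<in>\<Q>. emeasure Q (E Q - T) = 0) \<and>
          (\<forall>F\<in>sets M. (\<forall>Q\<in>\<Q>. emeasure Q (E Q - F) = 0) \<longrightarrow> (\<forall>Q\<in>\<Q>. emeasure Q (T - F) = 0)))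
        \<longleftrightarrow> (\<exists>T\<in>sets M. \<forall>Q\<in>\<Q>. emeasure Q (sym_diff T (E Q)) = 0)"
    if E: "\<forall>Q\<in>\<Q>. E Q \<in> sets M \<and> E Q \<subseteq> S Q" for E
  proof
    assume "\<exists>T\<in>sets M. (\<forall>Q\<in>\<Q>. emeasure Q (E Q - T) = 0) \<and>
      (\<forall>F\<in>sets M. (\<forall>Q\<in>\<Q>. emeasure Q (E Q - F) = 0) \<longrightarrow> (\<forall>Q\<in>\<Q>. emeasure Q (T - F) = 0))"
    then obtain T where "T \<in> sets M" and "\<forall>Q\<in>\<Q>. emeasure Q (E Q - T) = 0"
      and "\<forall>F\<in>sets M. (\<forall>Q\<in>\<Q>. emeasure Q (E Q - F) = 0) \<longrightarrow> (\<forall>Q\<in>\<Q>. emeasure Q (T - F) = 0)"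
      by blast
    with glue_if_ess_union[OF E] show "\<exists>T\<in>sets M. \<forall>Q\<in>\<Q>. emeasure Q (sym_diff T (E Q)) = 0"
      by blast
  next
    assume "\<exists>T\<in>sets M. \<forall>Q\<in>\<Q>. emeasure Q (sym_diff T (E Q)) = 0"
    then obtain T where T: "T \<in> sets M" and "\<forall>Q\<in>\<Q>. emeasure Q (sym_diff T (E Q)) = 0"
      by blast
    with E ess_union_if_glue[of E T]
    show "\<exists>T\<in>sets M. (\<forall>Q\<in>\<Q>. emeasure Q (E Q - T) = 0) \<and>
      (\<forall>F\<in>sets M. (\<forall>Q\<in>\<Q>. emeasure Q (E Q - F) = 0) \<longrightarrow> (\<forall>Q\<in>\<Q>. emeasure Q (T - F) = 0))"
      by blast
  qed
  then show ?thesis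
    unfolding hahn_localizable_def sets_glue_def by (simp cong: imp_cong)
qed

lemma support_ess_union:
  assumes Q: "Q \<in> \<Q>" and \<E>: "\<E> \<subseteq> sets M"
  shows "\<exists>U. U \<in> sets M \<and> U \<subseteq> S Q \<and> (\<forall>E\<in>\<E>. E - U \<in> null_sets Q) \<and>
           (\<forall>F\<in>sets M. (\<forall>E\<in>\<E>. E - F \<in> null_sets Q) \<longrightarrow> U - F \<in> null_sets Q)"
proof -
  interpret prob_space Q
    by (rule prob_space_family[OF Q])
  have "(\<lambda>E. E \<inter> S Q) ` \<E> \<subseteq> sets Q"
    using \<E> sets_support[OF Q] sets_family[OF Q] by auto
  then obtain \<C> where \<C>: "countable \<C>" "\<C> \<subseteq> (\<lambda>E. E \<inter> S Q) ` \<E>"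
    and null: "\<And>E. E \<in> (\<lambda>E. E \<inter> S Q) ` \<E> \<Longrightarrow> E - \<Union>\<C> \<in> null_sets Q"
    by (rule countable_ess_union) (rule that)
  have U: "\<Union>\<C> \<in> sets M"
    using \<C> \<E> sets_support[OF Q] by (intro sets.countable_Union) auto
  moreover have "\<Union>\<C> \<subseteq> S Q"
    using \<C>(2) by auto
  moreover have "E - \<Union>\<C> \<in> null_sets Q" if E: "E \<in> \<E>" for E
  proof -
    have "(space M - S Q) \<union> (E \<inter> S Q - \<Union>\<C>) \<in> null_sets Q"
      using E by (intro null_sets.Un compl_support_null[OF Q] null) blast
    then show ?thesis
      by (rule null_sets_family_subset[OF Q]) (use E \<E> U sets.sets_into_space in auto)
  qed
  moreover have "\<Union>\<C> - F \<in> null_sets Q"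
    if F: "F \<in> sets M" and EF: "\<forall>E\<in>\<E>. E - F \<in> null_sets Q" for F
  proof -
    have "(\<Union>C\<in>\<C>. C - F) \<in> null_sets Q"
    proof (rule null_sets_UN'[OF \<C>(1)])
      fix C
      assume "C \<in> \<C>"
      then obtain E where E: "E \<in> \<E>" "C = E \<inter> S Q"
        using \<C>(2) by auto
      with EF have "E - F \<in> null_sets Q"
        by blast
      then show "C - F \<in> null_sets Q"
        by (rule null_sets_family_subset[OF Q]) (use E F \<E> sets_support[OF Q] in auto)
    qed
    moreover have "\<Union>\<C> - F = (\<Union>C\<in>\<C>. C - F)"
      by blast
    ultimately show ?thesis
      by (simp only:)
  qed
  ultimately show ?thesis
    by blast
qed

lemma polar_ess_union_if_sets_glue:
  assumes glue: "sets_glue M \<Q> S" and \<E>: "\<E> \<subseteq> sets M"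
  shows "\<exists>T\<in>sets M. (\<forall>E\<in>\<E>. polar M \<Q> (E - T)) \<and>
           (\<forall>F\<in>sets M. (\<forall>E\<in>\<E>. polar M \<Q> (E - F)) \<longrightarrow> polar M \<Q> (T - F))"
proof -
  have "\<forall>Q\<in>\<Q>. \<exists>U. U \<in> sets M \<and> U \<subseteq> S Q \<and> (\<forall>E\<in>\<E>. E - U \<in> null_sets Q) \<and>
          (\<forall>F\<in>sets M. (\<forall>E\<in>\<E>. E - F \<in> null_sets Q) \<longrightarrow> U - F \<in> null_sets Q)"
    using support_ess_union \<E> by blast
  from bchoice[OF this] obtain U :: "'a measure \<Rightarrow> 'a set"
    where U: "\<forall>Q\<in>\<Q>. U Q \<in> sets M \<and> U Q \<subseteq> S Q \<and> (\<forall>E\<in>\<E>. E - U Q \<in> null_sets Q) \<and>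
          (\<forall>F\<in>sets M. (\<forall>E\<in>\<E>. E - F \<in> null_sets Q) \<longrightarrow> U Q - F \<in> null_sets Q)" ..
  have "\<exists>T\<in>sets M. \<forall>Q\<in>\<Q>. emeasure Q (sym_diff T (U Q)) = 0"
    by (rule glue[unfolded sets_glue_def, rule_format]) (use U in blast)
  then obtain T where T: "T \<in> sets M" and glued: "\<forall>Q\<in>\<Q>. emeasure Q (sym_diff T (U Q)) = 0"
    by blast
  have T_null: "sym_diff T (U Q) \<in> null_sets Q" if "Q \<in> \<Q>" for Q
    using that T U glued by (auto simp: null_sets_family_iff)
  have "polar M \<Q> (E - T)" if E: "E \<in> \<E>" for E
  proof -
    have "E - T \<in> null_sets Q" if Q: "Q \<in> \<Q>" for Q
    proof -
      have "E - U Q \<in> null_sets Q"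
        using E Q U by blast
      then have "(E - U Q) \<union> sym_diff T (U Q) \<in> null_sets Q"
        using T_null[OF Q] by (rule null_sets.Un)
      then show ?thesis
        by (rule null_sets_family_subset[OF Q]) (use E \<E> T in auto)
    qed
    then show "polar M \<Q> (E - T)"
      using E \<E> T by (subst polar_measurable_iff) auto
  qed
  moreover have "polar M \<Q> (T - F)"
    if F: "F \<in> sets M" and EF: "\<forall>E\<in>\<E>. polar M \<Q> (E - F)" for F
  proof -
    have "T - F \<in> null_sets Q" if Q: "Q \<in> \<Q>" for Q
    proof -
      have "\<forall>E\<in>\<E>. E - F \<in> null_sets Q"
      proof
        fix E
        assume E: "E \<in> \<E>"
        with \<E> F have "E - F \<in> sets M"
          by blast
        moreover from EF E have "polar M \<Q> (E - F)"
          by blast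
        ultimately show "E - F \<in> null_sets Q"
          using Q by (simp add: polar_measurable_iff)
      qed
      then have "U Q - F \<in> null_sets Q"
        using U Q F by blast
      with T_null[OF Q] have "sym_diff T (U Q) \<union> (U Q - F) \<in> null_sets Q"
        by (rule null_sets.Un)
      then show ?thesis
        by (rule null_sets_family_subset[OF Q]) (use F T in auto)
    qed
    then show "polar M \<Q> (T - F)"
      using F T by (subst polar_measurable_iff) auto
  qed
  ultimately show ?thesis
    using T by blast
qed

lemma level_ess_unions:
  fixes A :: "('a \<Rightarrow> real) set"
  assumes glue: "sets_glue M \<Q> S" and A: "A \<subseteq> borel_measurable M"
  shows "\<exists>T. \<forall>r. T r \<in> sets M \<and> (\<forall>f\<in>A. polar M \<Q> ({\<omega>\<in>space M. r < f \<omega>} - T r)) \<and>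
           (\<forall>v\<in>borel_measurable M. (\<forall>f\<in>A. qs M \<Q> (\<lambda>\<omega>. f \<omega> \<le> v \<omega>)) \<longrightarrow>
              polar M \<Q> (T r - {\<omega>\<in>space M. r < v \<omega>}))"
proof -
  have "\<exists>T. T \<in> sets M \<and> (\<forall>f\<in>A. polar M \<Q> ({\<omega>\<in>space M. r < f \<omega>} - T)) \<and>
           (\<forall>v\<in>borel_measurable M. (\<forall>f\<in>A. qs M \<Q> (\<lambda>\<omega>. f \<omega> \<le> v \<omega>)) \<longrightarrow>
              polar M \<Q> (T - {\<omega>\<in>space M. r < v \<omega>}))" for r
  proof -
    let ?\<E> = "(\<lambda>f. {\<omega>\<in>space M. r < f \<omega>}) ` A"
    have "?\<E> \<subseteq> sets M"
    proof
      fix E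
      assume "E \<in> ?\<E>"
      then obtain f where f: "f \<in> A" and E: "E = {\<omega>\<in>space M. r < f \<omega>}"
        by blast
      from f A have "f \<in> borel_measurable M"
        by blast
      then show "E \<in> sets M"
        unfolding E by (simp add: borel_measurable_iff_greater)
    qed
    from polar_ess_union_if_sets_glue[OF glue this] obtain T
      where T: "T \<in> sets M" and above: "\<forall>E\<in>?\<E>. polar M \<Q> (E - T)"
        and least: "\<forall>F\<in>sets M. (\<forall>E\<in>?\<E>. polar M \<Q> (E - F)) \<longrightarrow> polar M \<Q> (T - F)"
      by blast
    have "polar M \<Q> (T - {\<omega>\<in>space M. r < v \<omega>})"
      if v: "v \<in> borel_measurable M" "\<forall>f\<in>A. qs M \<Q> (\<lambda>\<omega>. f \<omega> \<le> v \<omega>)" for v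
    proof -
      have "polar M \<Q> ({\<omega>\<in>space M. r < f \<omega>} - {\<omega>\<in>space M. r < v \<omega>})" if f: "f \<in> A" for f
      proof -
        from v(2) f have "qs M \<Q> (\<lambda>\<omega>. f \<omega> \<le> v \<omega>)"
          by blast
        then have "qs M \<Q> (\<lambda>\<omega>. \<omega> \<notin> {\<omega>\<in>space M. r < f \<omega>} - {\<omega>\<in>space M. r < v \<omega>})"
          by (rule qs_mono) auto
        then show ?thesis
          by (subst (asm) qs_notin_iff) auto
      qed
      moreover have "{\<omega>\<in>space M. r < v \<omega>} \<in> sets M"
        using v(1) by (simp add: borel_measurable_iff_greater)
      ultimately show ?thesis
        using least by blast
    qed
    with T above show ?thesis
      by blast
  qed
  then show ?thesis
    by (rule choice[OF allI])
qed

lemma Linf_dedekind_complete_if_sets_glue: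
  assumes glue: "sets_glue M \<Q> S"
  shows "Linf_dedekind_complete M \<Q>"
  unfolding Linf_dedekind_complete_def
proof (intro allI impI)
  fix A :: "('a \<Rightarrow> real) set"
  assume "A \<subseteq> Linf M \<Q> \<and> A \<noteq> {} \<and> (\<exists>u\<in>Linf M \<Q>. \<forall>f\<in>A. qs_le M \<Q> f u)"
  then obtain f0 u where A: "A \<subseteq> Linf M \<Q>" and f0: "f0 \<in> A" and u: "u \<in> Linf M \<Q>"
    and below_u: "\<forall>f\<in>A. qs M \<Q> (\<lambda>\<omega>. f \<omega> \<le> u \<omega>)"
    unfolding qs_le_def by blast
  obtain c0 where c0: "qs M \<Q> (\<lambda>\<omega>. \<bar>f0 \<omega>\<bar> \<le> c0)"
    using A f0 unfolding Linf_def by blast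
  obtain cu where cu: "qs M \<Q> (\<lambda>\<omega>. \<bar>u \<omega>\<bar> \<le> cu)"
    using u unfolding Linf_def by blast
  have "A \<subseteq> borel_measurable M"
    using A unfolding Linf_def by auto
  from level_ess_unions[OF glue this] obtain T :: "real \<Rightarrow> 'a set"
    where T: "\<forall>r. T r \<in> sets M \<and> (\<forall>f\<in>A. polar M \<Q> ({\<omega>\<in>space M. r < f \<omega>} - T r)) \<and>
           (\<forall>v\<in>borel_measurable M. (\<forall>f\<in>A. qs M \<Q> (\<lambda>\<omega>. f \<omega> \<le> v \<omega>)) \<longrightarrow>
              polar M \<Q> (T r - {\<omega>\<in>space M. r < v \<omega>}))" ..
  \<comment> \<open>Every upper bound of \<open>A\<close> lies above \<open>- c0\<close> and every \<open>f \<in> A\<close> below \<open>cu + 1\<close>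
    (quasi-surely), so clipping the levels to this range changes nothing but keeps \<open>s\<close> bounded.\<close>
  define s where "s = level_sup (- c0) (cu + 1) T"
  have "s \<in> Linf M \<Q>"
  proof -
    have "\<bar>s \<omega>\<bar> \<le> \<bar>c0\<bar> + \<bar>cu\<bar> + 1" for \<omega>
      using level_sup_lower[of "- c0" "cu + 1" T \<omega>] level_sup_upper[of "- c0" "cu + 1" T \<omega>]
        abs_ge_self[of c0] abs_ge_minus_self[of c0] abs_ge_self[of cu]
      unfolding s_def by (auto simp: abs_le_iff max_def split: if_split_asm)
    then have "qs M \<Q> (\<lambda>\<omega>. \<bar>s \<omega>\<bar> \<le> \<bar>c0\<bar> + \<bar>cu\<bar> + 1)"
      by (rule qs_everywhere)
    moreover have "s \<in> borel_measurable M"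
      unfolding s_def using T by (intro borel_measurable_level_sup) blast
    ultimately show ?thesis
      unfolding Linf_def by blast
  qed
  moreover have "qs_le M \<Q> f s" if f: "f \<in> A" for f
    unfolding qs_le_def s_def
  proof (rule qs_le_level_sup)
    show "polar M \<Q> ({\<omega>\<in>space M. r < f \<omega>} - T r)" for r
      using T f by blast
    have "qs M \<Q> (\<lambda>\<omega>. f \<omega> \<le> u \<omega> \<and> \<bar>u \<omega>\<bar> \<le> cu)"
      using below_u f cu by (intro qs_conj) auto
    then show "qs M \<Q> (\<lambda>\<omega>. f \<omega> \<le> cu + 1)"
      by (rule qs_mono) (auto simp: abs_le_iff)
  qed
  moreover have "qs_le M \<Q> s v" if v: "v \<in> Linf M \<Q>" "\<forall>f\<in>A. qs_le M \<Q> f v" for v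
    unfolding qs_le_def s_def
  proof (rule qs_level_sup_le)
    show "polar M \<Q> (T r - {\<omega>\<in>space M. r < v \<omega>})" for r
      using T v unfolding Linf_def qs_le_def by blast
    show "T r \<subseteq> space M" for r
      using T sets.sets_into_space by blast
    have "qs M \<Q> (\<lambda>\<omega>. f0 \<omega> \<le> v \<omega> \<and> \<bar>f0 \<omega>\<bar> \<le> c0)"
      using v(2) f0 c0 unfolding qs_le_def by (intro qs_conj) auto
    then show "qs M \<Q> (\<lambda>\<omega>. - c0 \<le> v \<omega>)"
      by (rule qs_mono) (auto simp: abs_le_iff)
  qed
  ultimately show "\<exists>s\<in>Linf M \<Q>. (\<forall>f\<in>A. qs_le M \<Q> f s) \<and>
      (\<forall>u\<in>Linf M \<Q>. (\<forall>f\<in>A. qs_le M \<Q> f u) \<longrightarrow> qs_le M \<Q> s u)"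
    by blast
qed

lemma sup_eq_on_support:
  fixes g :: "'a measure \<Rightarrow> 'a \<Rightarrow> real" and s :: "'a \<Rightarrow> real"
  assumes g_meas: "\<And>R. R \<in> \<Q> \<Longrightarrow> g R \<in> borel_measurable M"
    and g_nonneg: "\<And>R \<omega>. R \<in> \<Q> \<Longrightarrow> \<omega> \<in> space M \<Longrightarrow> 0 \<le> g R \<omega>"
    and g_bounded: "\<And>R. R \<in> \<Q> \<Longrightarrow> qs M \<Q> (\<lambda>\<omega>. g R \<omega> \<le> c)"
    and s: "s \<in> Linf M \<Q>" and s_nonneg: "qs M \<Q> (\<lambda>\<omega>. 0 \<le> s \<omega>)"
    and s_upper: "\<And>R. R \<in> \<Q> \<Longrightarrow> qs M \<Q> (\<lambda>\<omega>. g R \<omega> * indicator (S R) \<omega> \<le> s \<omega>)"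
    and s_least: "\<And>v. v \<in> Linf M \<Q> \<Longrightarrow> qs M \<Q> (\<lambda>\<omega>. 0 \<le> v \<omega>) \<Longrightarrow>
      (\<And>R. R \<in> \<Q> \<Longrightarrow> qs M \<Q> (\<lambda>\<omega>. g R \<omega> * indicator (S R) \<omega> \<le> v \<omega>)) \<Longrightarrow>
      qs M \<Q> (\<lambda>\<omega>. s \<omega> \<le> v \<omega>)"
    and Q: "Q \<in> \<Q>"
  shows "qs M \<Q> (\<lambda>\<omega>. s \<omega> * indicator (S Q) \<omega> = g Q \<omega> * indicator (S Q) \<omega>)"
proof -
  define v where "v \<omega> = (if \<omega> \<in> S Q then g Q \<omega> else s \<omega>)" for \<omega>
  obtain cs where cs: "qs M \<Q> (\<lambda>\<omega>. \<bar>s \<omega>\<bar> \<le> cs)"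
    using s unfolding Linf_def by blast
  have "v \<in> Linf M \<Q>"
  proof -
    have [measurable]: "S Q \<in> sets M" "g Q \<in> borel_measurable M" "s \<in> borel_measurable M"
      using sets_support[OF Q] g_meas[OF Q] s unfolding Linf_def by auto
    have "v \<in> borel_measurable M"
      unfolding v_def by measurable
    moreover have "qs M \<Q> (\<lambda>\<omega>. \<bar>v \<omega>\<bar> \<le> max c cs)"
      using qs_conj[OF g_bounded[OF Q] cs] by (rule qs_mono) (auto simp: v_def g_nonneg[OF Q])
    ultimately show ?thesis
      unfolding Linf_def by blast
  qed
  moreover have "qs M \<Q> (\<lambda>\<omega>. 0 \<le> v \<omega>)"
    using s_nonneg by (rule qs_mono) (simp add: v_def g_nonneg[OF Q])
  moreover have "qs M \<Q> (\<lambda>\<omega>. g R \<omega> * indicator (S R) \<omega> \<le> v \<omega>)" if R: "R \<in> \<Q>" for R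
  proof (cases "R = Q")
    case True
    from s_upper[OF Q] show ?thesis
      by (rule qs_mono) (auto simp: v_def True)
  next
    case False
    have "qs M \<Q> (\<lambda>\<omega>. \<omega> \<notin> S Q \<inter> S R)"
      using polar_support_Int[OF Q R] False sets_support[OF Q] sets.sets_into_space
      by (subst qs_notin_iff) auto
    with s_upper[OF R] have "qs M \<Q> (\<lambda>\<omega>. g R \<omega> * indicator (S R) \<omega> \<le> s \<omega> \<and> \<omega> \<notin> S Q \<inter> S R)"
      by (rule qs_conj)
    then show ?thesis
      by (rule qs_mono) (auto simp: v_def g_nonneg[OF Q])
  qed
  ultimately have "qs M \<Q> (\<lambda>\<omega>. s \<omega> \<le> v \<omega>)"
    by (rule s_least)
  with s_upper[OF Q] have "qs M \<Q> (\<lambda>\<omega>. g Q \<omega> * indicator (S Q) \<omega> \<le> s \<omega> \<and> s \<omega> \<le> v \<omega>)"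
    by (rule qs_conj)
  then show ?thesis
    by (rule qs_mono) (auto simp: v_def indicator_def)
qed

lemma glue_functions_if_dedekind_complete:
  assumes DC: "Linf_dedekind_complete M \<Q>"
  shows "glue_functions M \<Q> \<Q> S"
  unfolding glue_functions_def
proof (intro allI impI, elim conjE exE)
  fix g :: "'a measure \<Rightarrow> 'a \<Rightarrow> real" and c
  assume g: "\<forall>Q\<in>\<Q>. g Q \<in> borel_measurable M \<and> (\<forall>\<omega>\<in>space M. 0 \<le> g Q \<omega>) \<and>
      qs M \<Q> (\<lambda>\<omega>. \<omega> \<notin> S Q \<longrightarrow> g Q \<omega> = 0)"
    and c: "\<forall>Q\<in>\<Q>. qs M \<Q> (\<lambda>\<omega>. g Q \<omega> \<le> c)"
  define f where "f Q \<omega> = g Q \<omega> * indicator (S Q) \<omega>" for Q \<omega>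
  define A where "A = insert (\<lambda>_. 0) (f ` \<Q>)"
  have f_bounded: "qs M \<Q> (\<lambda>\<omega>. \<bar>f Q \<omega>\<bar> \<le> \<bar>c\<bar>)" if Q: "Q \<in> \<Q>" for Q
    using c Q by (auto elim!: qs_mono simp: f_def indicator_def g)
  have "f Q \<in> Linf M \<Q>" if Q: "Q \<in> \<Q>" for Q
  proof -
    have [measurable]: "g Q \<in> borel_measurable M" "S Q \<in> sets M"
      using g sets_support Q by auto
    have "f Q \<in> borel_measurable M"
      unfolding f_def by measurable
    with f_bounded[OF Q] show ?thesis
      unfolding Linf_def by blast
  qed
  then have A_Linf: "A \<subseteq> Linf M \<Q>"
    unfolding A_def using Linf_const by blast
  have "qs M \<Q> (\<lambda>\<omega>. f Q \<omega> \<le> \<bar>c\<bar>)" if "Q \<in> \<Q>" for Q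
    using f_bounded[OF that] by (rule qs_mono) auto
  then have "\<forall>f'\<in>A. qs_le M \<Q> f' (\<lambda>_. \<bar>c\<bar>)"
    unfolding A_def qs_le_def by (auto intro: qs_everywhere)
  then have "\<exists>s\<in>Linf M \<Q>. (\<forall>f'\<in>A. qs_le M \<Q> f' s) \<and>
      (\<forall>u\<in>Linf M \<Q>. (\<forall>f'\<in>A. qs_le M \<Q> f' u) \<longrightarrow> qs_le M \<Q> s u)"
    using A_Linf Linf_const unfolding A_def
    by (intro DC[unfolded Linf_dedekind_complete_def, rule_format]) blast
  then obtain s where s: "s \<in> Linf M \<Q>" and s_upper: "\<forall>f'\<in>A. qs_le M \<Q> f' s"
    and s_least: "\<forall>u\<in>Linf M \<Q>. (\<forall>f'\<in>A. qs_le M \<Q> f' u) \<longrightarrow> qs_le M \<Q> s u"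
    by blast
  have "qs M \<Q> (\<lambda>\<omega>. s \<omega> * indicator (S Q) \<omega> = g Q \<omega> * indicator (S Q) \<omega>)" if Q: "Q \<in> \<Q>" for Q
  proof (rule sup_eq_on_support[OF _ _ _ s _ _ _ Q])
    show "g R \<in> borel_measurable M" "qs M \<Q> (\<lambda>\<omega>. g R \<omega> \<le> c)" if "R \<in> \<Q>" for R
      using g c that by auto
    show "0 \<le> g R \<omega>" if "R \<in> \<Q>" "\<omega> \<in> space M" for R \<omega>
      using g that by auto
    show "qs M \<Q> (\<lambda>\<omega>. 0 \<le> s \<omega>)"
      using s_upper unfolding A_def qs_le_def by simp
    show "qs M \<Q> (\<lambda>\<omega>. g R \<omega> * indicator (S R) \<omega> \<le> s \<omega>)" if "R \<in> \<Q>" for R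
      using s_upper that unfolding A_def qs_le_def f_def by simp
  next
    fix v
    assume v: "v \<in> Linf M \<Q>" and "qs M \<Q> (\<lambda>\<omega>. 0 \<le> v \<omega>)"
      and "\<And>R. R \<in> \<Q> \<Longrightarrow> qs M \<Q> (\<lambda>\<omega>. g R \<omega> * indicator (S R) \<omega> \<le> v \<omega>)"
    then have "\<forall>f'\<in>A. qs_le M \<Q> f' v"
      unfolding A_def qs_le_def f_def by blast
    with s_least v show "qs M \<Q> (\<lambda>\<omega>. s \<omega> \<le> v \<omega>)"
      unfolding qs_le_def by blast
  qed
  with s show "\<exists>h\<in>Linf M \<Q>. \<forall>Q\<in>\<Q>.
      qs M \<Q> (\<lambda>\<omega>. h \<omega> * indicator (S Q) \<omega> = g Q \<omega> * indicator (S Q) \<omega>)"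
    by blast
qed

lemma glue_set_by_function:
  fixes h :: "'a \<Rightarrow> real"
  assumes E: "\<forall>Q\<in>\<Q>. E Q \<in> sets M \<and> E Q \<subseteq> S Q" and h: "h \<in> borel_measurable M"
    and glued: "\<forall>Q\<in>\<Q>. qs M \<Q> (\<lambda>\<omega>. h \<omega> * indicator (S Q) \<omega> = indicator (E Q) \<omega> * indicator (S Q) \<omega>)"
  shows "\<exists>T\<in>sets M. \<forall>Q\<in>\<Q>. emeasure Q (sym_diff T (E Q)) = 0"
proof -
  define T where "T = {\<omega>\<in>space M. 1/2 \<le> h \<omega>}"
  have T: "T \<in> sets M"
    using h unfolding T_def by measurable
  have T_space: "T \<subseteq> space M"
    unfolding T_def by blast
  have "emeasure Q (sym_diff T (E Q)) = 0" if Q: "Q \<in> \<Q>" for Q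
  proof -
    from glued Q have "qs M \<Q> (\<lambda>\<omega>. h \<omega> * indicator (S Q) \<omega> = indicator (E Q) \<omega> * indicator (S Q) \<omega>)"
      by blast
    then have "qs M \<Q> (\<lambda>\<omega>. \<omega> \<notin> sym_diff T (E Q) \<inter> S Q)"
      by (rule qs_mono) (auto simp: T_def indicator_def of_bool_def split: if_splits)
    then have "polar M \<Q> (sym_diff T (E Q) \<inter> S Q)"
      using E Q by (subst (asm) qs_notin_iff) (auto simp: T_def dest: sets.sets_into_space)
    then have "sym_diff T (E Q) \<inter> S Q \<in> null_sets Q"
      using E Q T sets_support[OF Q] by (subst (asm) polar_measurable_iff) auto
    then have "(sym_diff T (E Q) \<inter> S Q) \<union> (space M - S Q) \<in> null_sets Q"
      using compl_support_null[OF Q] by (rule null_sets.Un)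
    then have "sym_diff T (E Q) \<in> null_sets Q"
      by (rule null_sets_family_subset[OF Q])
        (use E Q T T_space sets.sets_into_space[OF sets_support[OF Q]] in auto)
    then show ?thesis
      by (rule null_setsD1)
  qed
  with T show ?thesis
    by blast
qed

lemma sets_glue_if_glue_functions:
  assumes glue: "glue_functions M \<Q> \<Q> S"
  shows "sets_glue M \<Q> S"
  unfolding sets_glue_def
proof (intro allI impI)
  fix E
  assume E: "\<forall>Q\<in>\<Q>. E Q \<in> sets M \<and> E Q \<subseteq> S Q"
  let ?g = "\<lambda>Q. indicator (E Q) :: 'a \<Rightarrow> real"
  have "(\<forall>Q\<in>\<Q>. ?g Q \<in> borel_measurable M \<and> (\<forall>\<omega>\<in>space M. 0 \<le> ?g Q \<omega>) \<and>
          qs M \<Q> (\<lambda>\<omega>. \<omega> \<notin> S Q \<longrightarrow> ?g Q \<omega> = 0)) \<and> (\<exists>c. \<forall>Q\<in>\<Q>. qs M \<Q> (\<lambda>\<omega>. ?g Q \<omega> \<le> c))"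
    using E by (auto intro!: qs_everywhere exI[of _ 1] simp: indicator_def)
  from glue[unfolded glue_functions_def, rule_format, of ?g, OF this] obtain h where "h \<in> Linf M \<Q>"
    and "\<forall>Q\<in>\<Q>. qs M \<Q> (\<lambda>\<omega>. h \<omega> * indicator (S Q) \<omega> = ?g Q \<omega> * indicator (S Q) \<omega>)"
    by blast
  with E show "\<exists>T\<in>sets M. \<forall>Q\<in>\<Q>. emeasure Q (sym_diff T (E Q)) = 0"
    unfolding Linf_def by (blast intro: glue_set_by_function)
qed

end

theorem proposition3p3:
  fixes M :: "'a measure" and \<P> \<Q> :: "'a measure set" and S :: "'a measure \<Rightarrow> 'a set"
  assumes probs: "\<forall>P\<in>\<P>. prob_on M P"
    and sc: "sigma_convex M \<P>"
    and phl: "pre_hahn_localizable M \<P> \<Q> S"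
  shows "(hahn_localizable M \<P> \<Q> S \<longleftrightarrow> Linf_dedekind_complete M \<P>) \<and>
         (Linf_dedekind_complete M \<P> \<longleftrightarrow>
           (\<forall>g :: 'a measure \<Rightarrow> 'a \<Rightarrow> real.
              (\<forall>Q\<in>\<Q>. g Q \<in> borel_measurable M \<and> (\<forall>\<omega>\<in>space M. 0 \<le> g Q \<omega>) \<and>
                  qs M \<P> (\<lambda>\<omega>. \<omega> \<notin> S Q \<longrightarrow> g Q \<omega> = 0)) \<and>
              (\<exists>c. \<forall>Q\<in>\<Q>. qs M \<P> (\<lambda>\<omega>. g Q \<omega> \<le> c)) \<longrightarrow>
              (\<exists>h\<in>Linf M \<P>. \<forall>Q\<in>\<Q>.
                  qs M \<P> (\<lambda>\<omega>. h \<omega> * indicator (S Q) \<omega> = g Q \<omega> * indicator (S Q) \<omega>))))"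
proof -
  interpret localization M \<Q> S
    using phl by (rule localization_if_pre_hahn_localizable)
  have polar_eq: "polar M \<P> = polar M \<Q>"
    using probs phl by (rule polar_eq_if_pre_hahn_localizable)
  have HL: "hahn_localizable M \<P> \<Q> S \<longleftrightarrow> sets_glue M \<Q> S"
    using phl by (simp add: hahn_localizable_iff_sets_glue)
  have DC: "Linf_dedekind_complete M \<P> \<longleftrightarrow> Linf_dedekind_complete M \<Q>"
    using polar_eq by (rule qs_Linf_eq_if_polar_eq)
  have G: "glue_functions M \<P> \<Q> S \<longleftrightarrow> glue_functions M \<Q> \<Q> S"
    using qs_Linf_eq_if_polar_eq[OF polar_eq] by (simp add: glue_functions_def)
  have "sets_glue M \<Q> S \<Longrightarrow> Linf_dedekind_complete M \<Q>"
    and "Linf_dedekind_complete M \<Q> \<Longrightarrow> glue_functions M \<Q> \<Q> S"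
    and "glue_functions M \<Q> \<Q> S \<Longrightarrow> sets_glue M \<Q> S"
    by (fact Linf_dedekind_complete_if_sets_glue glue_functions_if_dedekind_complete
        sets_glue_if_glue_functions)+
  then show ?thesis
    unfolding glue_functions_def[symmetric] HL DC G by blast
qed

end
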